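(* Assume $\mathbb{E}\min(Z,W)<\infty$ and $q_1>0$. Then there exists a positive integer-valued random variable $N$ with $\mathbb{P}(N<\infty)=1$ such that, with probability one, $N\in S_n$ for all $n\ge N$.
   Context: Let $Z,W,(Z_n)_{n\ge1},(W_n)_{n\ge1}$ be independent, identically distributed random variables taking values in $\mathbb{N}=\{1,2,3,\dots\}$, with $q_1=\mathbb{P}(Z=1)$. Define the shortest-edge chain $S_n=\{n\}$ for $n\le 0$ and $S_n=\{n\}\cup S_{n-\min(Z_n,W_n)}$ for $n\ge1$. *)

theory Defs
  imports "HOL-Probability.Probability"
begin

text \<open>Given the step sizes d k = min(Z_k, W_k) (k \<ge> 1),
  in_chain d n m means m \<in> S_n, where S_n = {n} for n \<le> 0 and
  S_n = {n} \<union> S_(n - d n) for n \<ge> 1 (least solution of these equations).\<close>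
inductive in_chain :: "(nat \<Rightarrow> nat) \<Rightarrow> int \<Rightarrow> int \<Rightarrow> bool" for d :: "nat \<Rightarrow> nat" where
  self: "in_chain d n n"
| step: "n \<ge> 1 \<Longrightarrow> in_chain d (n - int (d (nat n))) m \<Longrightarrow> in_chain d n m"

definition chain_set :: "(nat \<Rightarrow> nat) \<Rightarrow> int \<Rightarrow> int set" where
  "chain_set d n = {m. in_chain d n m}"

end

theory Submission
  imports Defs
begin

text \<open>Call m a cut point of the step sequence d if no edge starting above m jumps
  below m, i.e. d (m + j) \<le> j for all j \<ge> 1.  Descending from any n \<ge> m the chain
  then cannot skip m, so m \<in> S_n.  For independent steps the probability that m is a
  cut point is the infinite product of the P(min(Z,W) \<le> j), j \<ge> 1, which is positive
  because the tails P(min(Z,W) > j) are summable (finite mean) and below 1 (as q_1 > 0).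
  Having infinitely many cut points is a tail event of probability at least this
  product, so by Kolmogorov's 0-1 law it is almost sure; N is the first cut point.\<close>

definition cut_point :: "(nat \<Rightarrow> nat) \<Rightarrow> nat \<Rightarrow> bool" where
  "cut_point d m \<longleftrightarrow> (\<forall>j\<ge>1. d (m + j) \<le> j)"

lemma in_chain_cut_point:
  assumes pos: "\<And>k. 1 \<le> d k" and cut: "cut_point d m" and "m \<le> n"
  shows "in_chain d (int n) (int m)"
  using \<open>m \<le> n\<close>
proof (induction n rule: less_induct)
  case (less n)
  show ?case
  proof (cases "n = m")
    case True
    then show ?thesis by (simp add: in_chain.self)
  next
    case False
    with less.prems have "m < n" by simp
    then have step_le: "d n \<le> n - m"
      using cut[unfolded cut_point_def, rule_format, of "n - m"] by simp
    have "in_chain d (int (n - d n)) (int m)"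
      using less.IH[of "n - d n"] step_le pos[of n] \<open>m < n\<close> by simp
    moreover have "int (n - d n) = int n - int (d (nat (int n)))"
      using step_le by simp
    ultimately show ?thesis
      using \<open>m < n\<close> in_chain.step[of "int n" d "int m"] by simp
  qed
qed

lemma has_prod_one_minus:
  fixes a :: "nat \<Rightarrow> real"
  assumes "summable a" and "\<And>n. 0 \<le> a n" and "\<And>n. a n < 1"
  shows "(\<lambda>n. 1 - a n) has_prod (\<Prod>n. 1 - a n)" and "(\<Prod>n. 1 - a n) > 0"
proof -
  have "abs_convergent_prod (\<lambda>n. 1 - a n)"
    using assms(1,2) by (intro summable_imp_abs_convergent_prod) simp
  then show prod: "(\<lambda>n. 1 - a n) has_prod (\<Prod>n. 1 - a n)"
    by (intro convergent_prod_has_prod abs_convergent_prod_imp_convergent_prod)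
  show "(\<Prod>n. 1 - a n) > 0"
    using has_prod_pos[OF prod] assms(3) by simp
qed

lemma (in prob_space) indep_events_prob_INT_LIMSEQ:
  assumes "indep_events F UNIV"
  shows "(\<lambda>n. \<Prod>i\<le>n. prob (F i)) \<longlonglongrightarrow> prob (\<Inter>i. F i)"
proof -
  have events: "range F \<subseteq> events"
    using assms by (simp add: indep_events_def)
  have "(\<lambda>n. prob (\<Inter>i\<le>n. F i)) \<longlonglongrightarrow> prob (\<Inter>n. \<Inter>i\<le>n. F i)"
    using events by (intro finite_Lim_measure_decseq) (auto simp: decseq_def)
  moreover have "prob (\<Inter>i\<le>n. F i) = (\<Prod>i\<le>n. prob (F i))" for n
    using assms by (simp add: indep_events_def)
  moreover have "(\<Inter>n. \<Inter>i\<le>n. F i) = (\<Inter>i. F i)"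
    by blast
  ultimately show ?thesis
    by simp
qed

lemma (in prob_space) prob_limsup_ge:
  fixes C :: "nat \<Rightarrow> 'a set"
  assumes "range C \<subseteq> events" and "\<And>m. c \<le> prob (C m)"
  shows "c \<le> prob (\<Inter>K. \<Union>m\<in>{K..}. C m)"
proof (rule LIMSEQ_le_const)
  show "(\<lambda>K. prob (\<Union>m\<in>{K..}. C m)) \<longlonglongrightarrow> prob (\<Inter>K. \<Union>m\<in>{K..}. C m)"
    using assms(1) by (intro finite_Lim_measure_decseq) (auto simp: decseq_def, force)
  have "prob (C K) \<le> prob (\<Union>m\<in>{K..}. C m)" for K
    using assms(1) by (intro finite_measure_mono) auto
  then show "\<exists>N. \<forall>K\<ge>N. c \<le> prob (\<Union>m\<in>{K..}. C m)"
    using assms(2) order_trans by blast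
qed

lemma (in prob_space) indep_events_reindex:
  fixes F :: "'j \<Rightarrow> 'a set" and f :: "'i \<Rightarrow> 'j"
  assumes "indep_events F UNIV" and "inj f"
  shows "indep_events (\<lambda>i. F (f i)) UNIV"
proof (rule indep_eventsI)
  show "F (f i) \<in> events" for i
    using assms(1) by (auto simp: indep_events_def)
next
  fix J :: "'i set" assume "finite J" "J \<noteq> {}"
  then have "prob (\<Inter>k\<in>f ` J. F k) = (\<Prod>k\<in>f ` J. prob (F k))"
    using assms(1)[unfolded indep_events_def] by (auto dest!: spec[of _ "f ` J"])
  moreover have "(\<Prod>k\<in>f ` J. prob (F k)) = (\<Prod>i\<in>J. prob (F (f i)))"
    using assms(2) by (simp add: prod.reindex inj_on_def)
  ultimately show "prob (\<Inter>i\<in>J. F (f i)) = (\<Prod>i\<in>J. prob (F (f i)))"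
    by simp
qed

lemma (in prob_space) indep_vars_combine_pairs:
  fixes X :: "'i + 'i \<Rightarrow> 'a \<Rightarrow> 'b::countable" and f :: "'b \<Rightarrow> 'b \<Rightarrow> 'c"
  assumes "indep_vars (\<lambda>_. count_space UNIV) X UNIV"
  shows "indep_vars (\<lambda>_. count_space UNIV) (\<lambda>i \<omega>. f (X (Inl i) \<omega>) (X (Inr i) \<omega>)) UNIV"
proof -
  have "indep_vars (\<lambda>i. PiM {Inl i, Inr i} (\<lambda>_. count_space UNIV))
          (\<lambda>i \<omega>. restrict (\<lambda>j. X j \<omega>) {Inl i, Inr i}) UNIV"
    using assms by (rule indep_vars_restrict) (auto simp: disjoint_family_on_def)
  then have "indep_vars (\<lambda>_. count_space UNIV)
          (\<lambda>i \<omega>. (\<lambda>x. f (x (Inl i)) (x (Inr i))) (restrict (\<lambda>j. X j \<omega>) {Inl i, Inr i})) UNIV"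
    by (rule indep_vars_compose2) measurable
  then show ?thesis
    by simp
qed

lemma (in prob_space) prob_less_min_pair:
  fixes X :: "'i + 'i \<Rightarrow> 'a \<Rightarrow> 'b::{linorder,countable}"
  assumes "indep_vars (\<lambda>_. count_space UNIV) X UNIV"
  shows "prob {\<omega> \<in> space M. t < min (X (Inl i) \<omega>) (X (Inr i) \<omega>)}
         = prob {\<omega> \<in> space M. t < X (Inl i) \<omega>} * prob {\<omega> \<in> space M. t < X (Inr i) \<omega>}"
proof -
  have "indep_events (\<lambda>k. {\<omega> \<in> space M. t < X k \<omega>}) UNIV"
    using assms by (rule indep_eventsI_indep_vars) simp
  then have "prob (\<Inter>k\<in>{Inl i, Inr i}. {\<omega> \<in> space M. t < X k \<omega>})
             = (\<Prod>k\<in>{Inl i, Inr i}. prob {\<omega> \<in> space M. t < X k \<omega>})"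
    unfolding indep_events_def by (auto dest!: spec[of _ "{Inl i, Inr i}"])
  moreover have "{\<omega> \<in> space M. t < min (X (Inl i) \<omega>) (X (Inr i) \<omega>)}
                 = (\<Inter>k\<in>{Inl i, Inr i}. {\<omega> \<in> space M. t < X k \<omega>})"
    by auto
  ultimately show ?thesis
    by simp
qed

lemma (in prob_space) prob_eq_if_distr_eq:
  assumes "distr M N X = distr M N Y" and [measurable]: "X \<in> measurable M N" "Y \<in> measurable M N"
    and [measurable]: "B \<in> sets N"
  shows "prob {\<omega> \<in> space M. X \<omega> \<in> B} = prob {\<omega> \<in> space M. Y \<omega> \<in> B}"
proof -
  have "prob {\<omega> \<in> space M. X \<omega> \<in> B} = measure (distr M N X) B"
    by (simp add: measure_distr vimage_def Int_def conj_commute)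
  also have "\<dots> = prob {\<omega> \<in> space M. Y \<omega> \<in> B}"
    unfolding assms(1) by (simp add: measure_distr vimage_def Int_def conj_commute)
  finally show ?thesis .
qed

locale indep_steps = prob_space +
  fixes D :: "nat \<Rightarrow> 'a \<Rightarrow> nat"
  assumes indep_steps: "indep_vars (\<lambda>_. count_space UNIV) D UNIV"
    and tails_eq: "\<And>j k. prob {\<omega> \<in> space M. j < D k \<omega>} = prob {\<omega> \<in> space M. j < D 0 \<omega>}"
    and finite_mean: "(\<integral>\<^sup>+ \<omega>. of_nat (D 0 \<omega>) \<partial>M) < \<infinity>"
    and steps_pos: "\<And>k \<omega>. \<omega> \<in> space M \<Longrightarrow> 1 \<le> D k \<omega>"
    and unit_step: "prob {\<omega> \<in> space M. D 0 \<omega> = 1} > 0"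
begin

lemma measurable_step [measurable]: "D k \<in> measurable M (count_space UNIV)"
  using indep_steps by (auto simp: indep_vars_def)

definition cut_event :: "nat \<Rightarrow> 'a set" where
  "cut_event m = {\<omega> \<in> space M. cut_point (\<lambda>k. D k \<omega>) m}"

definition step_tail :: "nat \<Rightarrow> real" where
  "step_tail j = prob {\<omega> \<in> space M. j < D 0 \<omega>}"

lemma prob_step_le: "prob {\<omega> \<in> space M. D k \<omega> \<le> j} = 1 - step_tail j"
proof -
  have "{\<omega> \<in> space M. D k \<omega> \<le> j} = space M - {\<omega> \<in> space M. j < D k \<omega>}"
    by auto
  then have "prob {\<omega> \<in> space M. D k \<omega> \<le> j} = 1 - prob {\<omega> \<in> space M. j < D k \<omega>}"
    by (simp add: prob_compl)
  then show ?thesis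
    using tails_eq[of j k] by (simp add: step_tail_def)
qed

lemma cut_event_eq_INT: "cut_event m = (\<Inter>j. {\<omega> \<in> space M. D (m + Suc j) \<omega> \<le> Suc j})"
proof -
  have "(\<forall>j\<ge>1. P j) \<longleftrightarrow> (\<forall>j. P (Suc j))" for P :: "nat \<Rightarrow> bool"
    by (metis Suc_le_D Suc_le_mono le0 One_nat_def)
  then show ?thesis
    unfolding cut_event_def cut_point_def by auto
qed

lemma cut_event_sets [measurable]: "cut_event m \<in> events"
  unfolding cut_event_eq_INT by measurable

lemma prob_cut_event_LIMSEQ: "(\<lambda>n. \<Prod>j\<le>n. 1 - step_tail (Suc j)) \<longlonglongrightarrow> prob (cut_event m)"
proof -
  have "indep_events (\<lambda>k. {\<omega> \<in> space M. D k \<omega> \<le> k - m}) UNIV"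
    using indep_steps by (rule indep_eventsI_indep_vars) simp
  then have "indep_events (\<lambda>j. {\<omega> \<in> space M. D (m + Suc j) \<omega> \<le> m + Suc j - m}) UNIV"
    by (rule indep_events_reindex) (simp add: inj_def)
  from indep_events_prob_INT_LIMSEQ[OF this] show ?thesis
    by (simp add: cut_event_eq_INT prob_step_le)
qed

lemma summable_step_tail: "summable step_tail"
proof (rule summable_suminf_not_top)
  have "(\<Sum>j. ennreal (step_tail j)) = (\<integral>\<^sup>+ \<omega>. of_nat (D 0 \<omega>) \<partial>M)"
    by (simp add: nn_integral_nat_function step_tail_def emeasure_eq_measure)
  with finite_mean show "(\<Sum>j. ennreal (step_tail j)) \<noteq> \<top>"
    by simp
qed (simp add: step_tail_def)

lemma step_tail_Suc_less_1: "step_tail (Suc j) < 1"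
proof -
  have "step_tail (Suc j) \<le> step_tail 1"
    unfolding step_tail_def by (intro finite_measure_mono) auto
  also have "\<dots> = 1 - prob {\<omega> \<in> space M. D 0 \<omega> \<le> 1}"
    using prob_step_le[of 0 1] by simp
  also have "\<dots> \<le> 1 - prob {\<omega> \<in> space M. D 0 \<omega> = 1}"
    by (simp, intro finite_measure_mono) auto
  finally show ?thesis
    using unit_step by simp
qed

lemma prob_cut_event: "prob (cut_event m) = (\<Prod>j. 1 - step_tail (Suc j))"
  and prob_cut_event_pos: "prob (cut_event m) > 0"
proof -
  have "summable (\<lambda>j. step_tail (Suc j))"
    using summable_step_tail by (simp add: summable_Suc_iff)
  moreover have "0 \<le> step_tail (Suc j)" for j
    by (simp add: step_tail_def)
  ultimately have "(\<lambda>j. 1 - step_tail (Suc j)) has_prod (\<Prod>j. 1 - step_tail (Suc j))"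
    and pos: "(\<Prod>j. 1 - step_tail (Suc j)) > 0"
    using step_tail_Suc_less_1 by (rule has_prod_one_minus)+
  then show eq: "prob (cut_event m) = (\<Prod>j. 1 - step_tail (Suc j))"
    using prob_cut_event_LIMSEQ has_prod_imp_tendsto LIMSEQ_unique by blast
  show "prob (cut_event m) > 0"
    unfolding eq by (rule pos)
qed

definition step_sigma :: "nat \<Rightarrow> 'a set set" where
  "step_sigma k = sigma_sets (space M) {D k -` B \<inter> space M | B. B \<in> sets (count_space UNIV)}"

lemma indep_step_sigma: "indep_sets step_sigma UNIV"
  using indep_steps unfolding indep_vars_def step_sigma_def by blast

lemma sigma_algebra_step_sigma: "sigma_algebra (space M) (step_sigma k)"
  unfolding step_sigma_def by (rule sigma_algebra_sigma_sets) blast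

lemma step_sigma_subset: "step_sigma k \<subseteq> Pow (space M)"
  unfolding step_sigma_def by (auto dest: sigma_sets_into_sp[rotated])

lemma sigma_algebra_sigma_steps_from:
  "sigma_algebra (space M) (sigma_sets (space M) (\<Union> (step_sigma ` {n..})))"
  using step_sigma_subset by (intro sigma_algebra_sigma_sets) blast

lemma cut_event_in_sigma_steps_from:
  assumes "n \<le> m"
  shows "cut_event m \<in> sigma_sets (space M) (\<Union> (step_sigma ` {n..}))"
proof -
  interpret S: sigma_algebra "space M" "sigma_sets (space M) (\<Union> (step_sigma ` {n..}))"
    by (rule sigma_algebra_sigma_steps_from)
  have "{\<omega> \<in> space M. D k \<omega> \<le> i} \<in> step_sigma k" for k i
    unfolding step_sigma_def by (intro sigma_sets.Basic) (auto intro!: exI[of _ "{..i}"])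
  then have "{\<omega> \<in> space M. D (m + Suc j) \<omega> \<le> Suc j}
              \<in> sigma_sets (space M) (\<Union> (step_sigma ` {n..}))" for j
    using assms by (intro sigma_sets.Basic UN_I[of "m + Suc j"]) auto
  then show ?thesis
    unfolding cut_event_eq_INT by (intro S.countable_INT) auto
qed

lemma limsup_cut_event_in_tail_events: "(\<Inter>K. \<Union>m\<in>{K..}. cut_event m) \<in> tail_events step_sigma"
  unfolding tail_events_def
proof
  fix n
  interpret S: sigma_algebra "space M" "sigma_sets (space M) (\<Union> (step_sigma ` {n..}))"
    by (rule sigma_algebra_sigma_steps_from)
  have "(\<Inter>K. \<Union>m\<in>{K..}. cut_event m) = (\<Inter>K\<in>{n..}. \<Union>m\<in>{K..}. cut_event m)"
    by (intro decseq_SucI INT_decseq_offset UN_mono) auto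
  also have "\<dots> \<in> sigma_sets (space M) (\<Union> (step_sigma ` {n..}))"
    using cut_event_in_sigma_steps_from by (intro S.countable_INT S.countable_UN) auto
  finally show "(\<Inter>K. \<Union>m\<in>{K..}. cut_event m) \<in> sigma_sets (space M) (\<Union> (step_sigma ` {n..}))" .
qed

theorem AE_infinite_cut_points: "AE \<omega> in M. infinite {m. cut_point (\<lambda>k. D k \<omega>) m}"
proof -
  let ?L = "\<Inter>K. \<Union>m\<in>{K..}. cut_event m"
  have "prob ?L = 0 \<or> prob ?L = 1"
    using sigma_algebra_step_sigma indep_step_sigma limsup_cut_event_in_tail_events
    by (rule kolmogorov_0_1_law)
  moreover have "prob (cut_event 0) \<le> prob ?L"
    by (rule prob_limsup_ge) (auto simp: prob_cut_event)
  ultimately have "prob ?L = 1"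
    using prob_cut_event_pos[of 0] by linarith
  then have "AE \<omega> in M. \<omega> \<in> ?L"
    by (subst prob_eq_1[symmetric]) measurable
  then show ?thesis
    by eventually_elim (auto simp: cut_event_def infinite_nat_iff_unbounded_le)
qed

lemma pred_cut_point [measurable]: "Measurable.pred M (\<lambda>\<omega>. cut_point (\<lambda>k. D k \<omega>) m)"
  using cut_event_sets by (simp add: pred_def cut_event_def)

definition first_cut :: "'a \<Rightarrow> enat" where
  "first_cut \<omega> = (if \<exists>m\<ge>1. cut_point (\<lambda>k. D k \<omega>) m
                   then enat (LEAST m. 1 \<le> m \<and> cut_point (\<lambda>k. D k \<omega>) m) else \<infinity>)"

lemma measurable_first_cut [measurable]: "first_cut \<in> measurable M (count_space UNIV)"
  unfolding first_cut_def by measurable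

lemma first_cut_ge_1: "1 \<le> first_cut \<omega>"
  by (auto simp: first_cut_def one_enat_def intro: LeastI2_ex)

lemma AE_first_cut_finite: "AE \<omega> in M. first_cut \<omega> < \<infinity>"
  using AE_infinite_cut_points
  by eventually_elim (auto simp: first_cut_def infinite_nat_iff_unbounded_le)

lemma first_cut_in_chain:
  assumes "\<omega> \<in> space M" and "first_cut \<omega> \<le> enat n"
  shows "in_chain (\<lambda>k. D k \<omega>) (int n) (int (the_enat (first_cut \<omega>)))"
proof -
  let ?cut = "\<lambda>m. 1 \<le> m \<and> cut_point (\<lambda>k. D k \<omega>) m"
  have "\<exists>m. ?cut m"
    using assms(2) by (auto simp: first_cut_def split: if_splits)
  then have "?cut (Least ?cut)"
    by (rule LeastI_ex)
  moreover have "first_cut \<omega> = enat (Least ?cut)"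
    using \<open>\<exists>m. ?cut m\<close> by (simp add: first_cut_def)
  ultimately show ?thesis
    using assms steps_pos in_chain_cut_point by simp
qed

end

lemma indep_steps_min_pairs:
  fixes M :: "'a measure" and Zs Ws :: "nat \<Rightarrow> 'a \<Rightarrow> nat"
  assumes "prob_space M"
    and indep: "prob_space.indep_vars M (\<lambda>_. count_space UNIV)
                  (\<lambda>i. case i of Inl k \<Rightarrow> Zs k | Inr k \<Rightarrow> Ws k) (UNIV :: (nat + nat) set)"
    and distZ: "\<And>k. distr M (count_space UNIV) (Zs k) = distr M (count_space UNIV) (Zs 0)"
    and distW: "\<And>k. distr M (count_space UNIV) (Ws k) = distr M (count_space UNIV) (Zs 0)"
    and posZ: "\<And>k \<omega>. \<omega> \<in> space M \<Longrightarrow> 1 \<le> Zs k \<omega>"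
    and posW: "\<And>k \<omega>. \<omega> \<in> space M \<Longrightarrow> 1 \<le> Ws k \<omega>"
    and finmean: "(\<integral>\<^sup>+ \<omega>. ennreal (real (min (Zs 0 \<omega>) (Ws 0 \<omega>))) \<partial>M) < \<infinity>"
    and q1: "measure M {\<omega> \<in> space M. Zs 0 \<omega> = 1} > 0"
  shows "indep_steps M (\<lambda>k \<omega>. min (Zs k \<omega>) (Ws k \<omega>))"
proof -
  interpret prob_space M by fact
  define X where "X = (\<lambda>i. case i of Inl k \<Rightarrow> Zs k | Inr k \<Rightarrow> Ws k)"
  have rv: "X i \<in> measurable M (count_space UNIV)" for i
    using indep by (simp add: indep_vars_def X_def)
  have [measurable]: "Zs k \<in> measurable M (count_space UNIV)" "Ws k \<in> measurable M (count_space UNIV)" for k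
    using rv[of "Inl k"] rv[of "Inr k"] by (simp_all add: X_def)
  have tail_Z: "prob {\<omega> \<in> space M. j < Zs k \<omega>} = prob {\<omega> \<in> space M. j < Zs 0 \<omega>}" for j k
    using prob_eq_if_distr_eq[OF distZ[of k], of "{j<..}"] by simp
  have tail_W: "prob {\<omega> \<in> space M. j < Ws k \<omega>} = prob {\<omega> \<in> space M. j < Zs 0 \<omega>}" for j k
    using prob_eq_if_distr_eq[OF distW[of k], of "{j<..}"] by simp
  have tail_min: "prob {\<omega> \<in> space M. j < min (Zs k \<omega>) (Ws k \<omega>)}
                  = prob {\<omega> \<in> space M. j < Zs 0 \<omega>} ^ 2" for j k
    using prob_less_min_pair[OF indep[folded X_def], of j k] tail_Z[of j k] tail_W[of j k]
    by (simp add: X_def power2_eq_square)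
  show ?thesis
  proof
    show "indep_vars (\<lambda>_. count_space UNIV) (\<lambda>k \<omega>. min (Zs k \<omega>) (Ws k \<omega>)) UNIV"
      using indep_vars_combine_pairs[OF indep, of min] by simp
    show "prob {\<omega> \<in> space M. j < min (Zs k \<omega>) (Ws k \<omega>)}
          = prob {\<omega> \<in> space M. j < min (Zs 0 \<omega>) (Ws 0 \<omega>)}" for j k
      by (simp only: tail_min)
    show "(\<integral>\<^sup>+ \<omega>. of_nat (min (Zs 0 \<omega>) (Ws 0 \<omega>)) \<partial>M) < \<infinity>"
      using finmean by (simp add: ennreal_of_nat_eq_real_of_nat)
    show "1 \<le> min (Zs k \<omega>) (Ws k \<omega>)" if "\<omega> \<in> space M" for k \<omega>
      using posZ[OF that] posW[OF that] by simp
    have "prob {\<omega> \<in> space M. Zs 0 \<omega> = 1} \<le> prob {\<omega> \<in> space M. min (Zs 0 \<omega>) (Ws 0 \<omega>) = 1}"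
      using posW by (intro finite_measure_mono) auto
    with q1 show "prob {\<omega> \<in> space M. min (Zs 0 \<omega>) (Ws 0 \<omega>) = 1} > 0"
      by simp
  qed
qed

theorem mainTheorem7:
  fixes M :: "'a measure" and Zs Ws :: "nat \<Rightarrow> 'a \<Rightarrow> nat"
  assumes "prob_space M"
    and indep: "prob_space.indep_vars M (\<lambda>_. count_space UNIV)
                  (\<lambda>i. case i of Inl k \<Rightarrow> Zs k | Inr k \<Rightarrow> Ws k) (UNIV :: (nat + nat) set)"
    and distZ: "\<And>k. distr M (count_space UNIV) (Zs k) = distr M (count_space UNIV) (Zs 0)"
    and distW: "\<And>k. distr M (count_space UNIV) (Ws k) = distr M (count_space UNIV) (Zs 0)"
    and posZ: "\<And>k \<omega>. \<omega> \<in> space M \<Longrightarrow> Zs k \<omega> \<ge> 1"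
    and posW: "\<And>k \<omega>. \<omega> \<in> space M \<Longrightarrow> Ws k \<omega> \<ge> 1"
    and finmean: "(\<integral>\<^sup>+ \<omega>. ennreal (real (min (Zs 0 \<omega>) (Ws 0 \<omega>))) \<partial>M) < \<infinity>"
    and q1: "measure M {\<omega> \<in> space M. Zs 0 \<omega> = 1} > 0"
  shows "\<exists>N :: 'a \<Rightarrow> enat.
           N \<in> measurable M (count_space UNIV)
         \<and> (\<forall>\<omega>\<in>space M. N \<omega> \<ge> 1)
         \<and> measure M {\<omega> \<in> space M. N \<omega> < \<infinity>} = 1
         \<and> (AE \<omega> in M. \<forall>n::nat. enat n \<ge> N \<omega> \<longrightarrow>
               int (the_enat (N \<omega>)) \<in> chain_set (\<lambda>k. min (Zs k \<omega>) (Ws k \<omega>)) (int n))"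
proof -
  interpret indep_steps M "\<lambda>k \<omega>. min (Zs k \<omega>) (Ws k \<omega>)"
    using assms by (rule indep_steps_min_pairs)
  have "prob {\<omega> \<in> space M. first_cut \<omega> < \<infinity>} = 1"
    by (rule prob_eq_1[THEN iffD2]) (use AE_first_cut_finite in auto)
  moreover have "AE \<omega> in M. \<forall>n::nat. enat n \<ge> first_cut \<omega> \<longrightarrow>
      int (the_enat (first_cut \<omega>)) \<in> chain_set (\<lambda>k. min (Zs k \<omega>) (Ws k \<omega>)) (int n)"
    using first_cut_in_chain by (auto simp: chain_set_def)
  ultimately show ?thesis
    using measurable_first_cut first_cut_ge_1 by blast
qed

end
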